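(* Let $\rho\in(0,1)\cup(1,\infty)$, $\xi\in\mathbb{R}$, and $H=\frac{1}{2(1+\rho\sinh^2\chi)}\big(\cosh^2\chi P_\chi^2+\frac{P_\phi^2}{\tanh^2\chi}+\xi\sinh^2\chi\big)$ on $(\chi,\phi)\in(0,\infty)\times\mathbb{S}^1$. Consider trajectories of the Hamiltonian flow on the level set $H=E$, $P_\phi=L>0$, with $\phi$ normalized by a rotation so that $\phi=0$ where $\chi$ is minimal. Let $\sigma=2(\rho-1)E-\xi$, $e=\sqrt{1+\frac{L^2\sigma}{(E+L^2/2)^2}}$ and $E_+=L\big[\sqrt{\xi+\rho(\rho-1)L^2}-(\rho-\tfrac12)L\big]$. If $E\in[E_+,\frac{\xi}{2\rho})$ and $\xi-\rho L^2>0$, the trajectories have equation $$\frac{L^2}{\tanh^2\chi}=\Big(E+\frac{L^2}{2}\Big)\big(1+e\cos(2\phi)\big),$$ and they are closed curves since $e<1$. *)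

theory Defs
  imports "HOL-Analysis.Analysis"
begin

text \<open>The Hamiltonian on the cotangent bundle of (0,inf) x S^1, in coordinates
  (chi, phi, P_chi, P_phi); phi is taken as a real lift of the angle.\<close>
definition Ham :: "real \<Rightarrow> real \<Rightarrow> real \<Rightarrow> real \<Rightarrow> real \<Rightarrow> real \<Rightarrow> real" where
  "Ham \<rho> \<xi> chi phi pchi pphi =
     (cosh chi ^ 2 * pchi ^ 2 + pphi ^ 2 / tanh chi ^ 2 + \<xi> * sinh chi ^ 2)
     / (2 * (1 + \<rho> * sinh chi ^ 2))"

definition ham_trajectory ::
  "real \<Rightarrow> real \<Rightarrow> (real \<Rightarrow> real) \<Rightarrow> (real \<Rightarrow> real) \<Rightarrow> (real \<Rightarrow> real) \<Rightarrow> (real \<Rightarrow> real) \<Rightarrow> bool" where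
  "ham_trajectory \<rho> \<xi> chi phi pchi pphi \<longleftrightarrow>
     (\<forall>t. chi t > 0 \<and>
        (chi has_real_derivative deriv (\<lambda>p. Ham \<rho> \<xi> (chi t) (phi t) p (pphi t)) (pchi t)) (at t) \<and>
        (phi has_real_derivative deriv (\<lambda>p. Ham \<rho> \<xi> (chi t) (phi t) (pchi t) p) (pphi t)) (at t) \<and>
        (pchi has_real_derivative - deriv (\<lambda>x. Ham \<rho> \<xi> x (phi t) (pchi t) (pphi t)) (chi t)) (at t) \<and>
        (pphi has_real_derivative - deriv (\<lambda>y. Ham \<rho> \<xi> (chi t) y (pchi t) (pphi t)) (phi t)) (at t))"

end

theory Submission
  imports Defs
begin

text \<open>Along a trajectory with P_phi = L on the level set H = E put
  u = L^2 coth^2 chi - (E + L^2/2) and v = -L coth chi P_chi. Hamilton's equations and the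
  energy relation give u' = 2 v phi' and v' = -2 u phi', so the pair (u, v) turns through the
  angle -2 phi and u = u0 cos (2 phi), with u0 the value of u where chi is minimal; there
  P_chi = 0 and phi = 0. At that point the energy relation gives
  u0^2 = (E + L^2/2)^2 + L^2 sigma, and u0 \<ge> 0 since u is maximal there while phi' \<noteq> 0.
  Hence u0 = (E + L^2/2) e, and e < 1 because 0 < E < xi/(2 rho) forces sigma < 0.\<close>

lemma Ham_eq_coth:
  "Ham \<rho> \<xi> x y p q =
     (cosh x ^ 2 * p ^ 2 + q ^ 2 * (cosh x / sinh x) ^ 2 + \<xi> * sinh x ^ 2) / (2 * (1 + \<rho> * sinh x ^ 2))"
  by (simp add: Ham_def tanh_def power_divide)

lemma has_real_derivative_Ham_pchi:
  "((\<lambda>p. Ham \<rho> \<xi> x y p q) has_real_derivative cosh x ^ 2 * p / (1 + \<rho> * sinh x ^ 2)) (at p)"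
  unfolding Ham_eq_coth
  by (rule DERIV_cong[OF DERIV_cdivide], (rule derivative_eq_intros refl)+)
    (simp del: distrib_left_numeral)

lemma has_real_derivative_Ham_pphi:
  "((\<lambda>q. Ham \<rho> \<xi> x y p q) has_real_derivative
     q * (cosh x / sinh x) ^ 2 / (1 + \<rho> * sinh x ^ 2)) (at q)"
  unfolding Ham_eq_coth
  by (rule DERIV_cong[OF DERIV_cdivide], (rule derivative_eq_intros refl)+)
    (simp del: distrib_left_numeral)

lemma has_real_derivative_coth:
  "sinh x \<noteq> 0 \<Longrightarrow> ((\<lambda>x. cosh x / sinh x) has_real_derivative - 1 / sinh x ^ 2) (at x)"
  by (rule derivative_eq_intros refl | simp)+
    (simp add: divide_simps cosh_square_eq flip: power2_eq_square; simp add: algebra_simps power2_eq_square)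

text \<open>The derivative is expressed through the value of Ham, so that along a trajectory the
  energy can be substituted for it.\<close>

lemma has_real_derivative_Ham_chi:
  assumes "x \<noteq> 0" "1 + \<rho> * sinh x ^ 2 \<noteq> 0"
  shows "((\<lambda>x. Ham \<rho> \<xi> x y p q) has_real_derivative
     sinh x * cosh x * (p ^ 2 - q ^ 2 / sinh x ^ 4 + \<xi> - 2 * \<rho> * Ham \<rho> \<xi> x y p q)
       / (1 + \<rho> * sinh x ^ 2)) (at x)"
proof -
  have "sinh x \<noteq> 0" using assms by simp
  then have coth: "((\<lambda>x. cosh x / sinh x) has_real_derivative - 1 / sinh x ^ 2) (at x)"
    by (rule has_real_derivative_coth)
  have num: "((\<lambda>x. cosh x ^ 2 * p ^ 2 + q ^ 2 * (cosh x / sinh x) ^ 2 + \<xi> * sinh x ^ 2)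
      has_real_derivative 2 * sinh x * cosh x * p ^ 2 - 2 * q ^ 2 * cosh x / sinh x ^ 3
        + 2 * \<xi> * sinh x * cosh x) (at x)"
    by (rule coth derivative_eq_intros refl)+ (simp add: power2_eq_square power3_eq_cube)
  have den: "((\<lambda>x. 2 * (1 + \<rho> * sinh x ^ 2)) has_real_derivative 4 * \<rho> * sinh x * cosh x) (at x)"
    by (rule derivative_eq_intros refl)+ simp
  have quotient: "(N' * (2 * K) - N * (4 * \<rho> * s * c)) / (2 * K * (2 * K))
      = s * c * (p ^ 2 - q ^ 2 / s ^ 4 + \<xi> - 2 * \<rho> * (N / (2 * K))) / K"
    if "N' = 2 * s * c * p ^ 2 - 2 * q ^ 2 * c / s ^ 3 + 2 * \<xi> * s * c" "s \<noteq> 0" "K \<noteq> 0"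
    for N N' K s c :: real
    unfolding that(1) using that(2,3)
    by (simp add: field_simps power2_eq_square power3_eq_cube power4_eq_xxxx)
  show ?thesis
    unfolding Ham_eq_coth
  proof (rule DERIV_cong[OF DERIV_divide[OF num den]])
    show "2 * (1 + \<rho> * (sinh x)\<^sup>2) \<noteq> 0" using assms by simp
  qed (rule quotient; use assms \<open>sinh x \<noteq> 0\<close> in simp)
qed

lemma coth_sq_eq: "(x::real) \<noteq> 0 \<Longrightarrow> (cosh x / sinh x) ^ 2 = 1 + 1 / sinh x ^ 2"
  by (simp add: power_divide cosh_square_eq field_simps)

lemma coth_sq_antimono:
  fixes x y :: real
  assumes "0 < x" "x \<le> y"
  shows "(cosh y / sinh y) ^ 2 \<le> (cosh x / sinh x) ^ 2"
proof -
  have "0 < sinh x" "sinh x \<le> sinh y" using assms by auto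
  then have "1 / sinh y ^ 2 \<le> 1 / sinh x ^ 2"
    by (intro divide_left_mono power_mono) auto
  then show ?thesis using assms by (simp add: coth_sq_eq)
qed

lemma rotating_pair_eq_cos:
  fixes u v \<theta> \<omega> :: "real \<Rightarrow> real"
  assumes u: "\<And>t. (u has_real_derivative 2 * v t * \<omega> t) (at t)"
    and v: "\<And>t. (v has_real_derivative - 2 * u t * \<omega> t) (at t)"
    and \<theta>: "\<And>t. (\<theta> has_real_derivative \<omega> t) (at t)"
    and start: "v t0 = 0" "\<theta> t0 = 0"
  shows "u t = u t0 * cos (2 * \<theta> t)"
proof -
  define F where "F t = u t * cos (2 * \<theta> t) - v t * sin (2 * \<theta> t)" for t
  define G where "G t = u t * sin (2 * \<theta> t) + v t * cos (2 * \<theta> t)" for t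
  have cos: "((\<lambda>t. cos (2 * \<theta> t)) has_real_derivative - sin (2 * \<theta> t) * (2 * \<omega> t)) (at t)" for t
    by (rule DERIV_chain2[OF DERIV_cos DERIV_cmult[OF \<theta>]])
  have sin: "((\<lambda>t. sin (2 * \<theta> t)) has_real_derivative cos (2 * \<theta> t) * (2 * \<omega> t)) (at t)" for t
    by (rule DERIV_chain2[OF DERIV_sin DERIV_cmult[OF \<theta>]])
  have "(F has_real_derivative 0) (at t)" for t
    unfolding F_def
    by (rule DERIV_cong[OF DERIV_diff[OF DERIV_mult[OF u cos] DERIV_mult[OF v sin]]]) (simp add: algebra_simps)
  then have F: "F t = u t0" for t
    using DERIV_isconst_all[of F t t0] start by (simp add: F_def)
  have "(G has_real_derivative 0) (at t)" for t
    unfolding G_def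
    by (rule DERIV_cong[OF DERIV_add[OF DERIV_mult[OF u sin] DERIV_mult[OF v cos]]]) (simp add: algebra_simps)
  then have G: "G t = 0" for t
    using DERIV_isconst_all[of G t t0] start by (simp add: G_def)
  have "F t * cos (2 * \<theta> t) + G t * sin (2 * \<theta> t)
      = u t * ((sin (2 * \<theta> t))\<^sup>2 + (cos (2 * \<theta> t))\<^sup>2)"
    unfolding F_def G_def power2_eq_square by algebra
  also have "\<dots> = u t"
    by (simp only: sin_cos_squared_add mult_1_right)
  finally show ?thesis by (simp add: F G)
qed

lemma rotating_pair_max_nonneg:
  fixes u \<theta> \<omega> :: "real \<Rightarrow> real"
  assumes u: "\<And>t. u t = u t0 * cos (2 * \<theta> t)" and max: "\<And>t. u t \<le> u t0"
    and \<theta>: "\<And>t. (\<theta> has_real_derivative \<omega> t) (at t)"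
    and start: "\<theta> t0 = 0" and moving: "\<omega> t0 \<noteq> 0"
  shows "u t0 \<ge> 0"
proof (rule ccontr)
  assume "\<not> u t0 \<ge> 0"
  moreover have "u t0 * cos (2 * \<theta> t) \<le> u t0 * 1" for t
    using max[of t] u[of t] by simp
  ultimately have "1 \<le> cos (2 * \<theta> t)" for t
    by (simp add: mult_le_cancel_left)
  then have "cos (2 * \<theta> t) = 1" for t
    using cos_le_one[of "2 * \<theta> t"] by (intro antisym)
  then have "sin (2 * \<theta> t) = 0" for t
    using sin_cos_squared_add[of "2 * \<theta> t"] by simp
  then have "((\<lambda>t. sin (2 * \<theta> t)) has_real_derivative 0) (at t0)"
    by simp
  moreover have "((\<lambda>t. sin (2 * \<theta> t)) has_real_derivative cos (2 * \<theta> t0) * (2 * \<omega> t0)) (at t0)"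
    by (rule DERIV_chain2[OF DERIV_sin DERIV_cmult[OF \<theta>]])
  ultimately show False
    using DERIV_unique start moving by fastforce
qed

text \<open>In the next two identities s, c and p stand for sinh chi, cosh chi and P_chi; the left-hand
  side of the first is the derivative of v given by Hamilton's equations.\<close>

lemma energy_level_rotation_identity:
  fixes s c p L \<rho> \<xi> E :: real
  assumes s: "s \<noteq> 0" and K: "1 + \<rho> * s ^ 2 \<noteq> 0" and c: "c ^ 2 = 1 + s ^ 2"
    and energy: "c ^ 2 * p ^ 2 + L ^ 2 * (c / s) ^ 2 + \<xi> * s ^ 2 = 2 * E * (1 + \<rho> * s ^ 2)"
  shows "- L * (- 1 / s ^ 2 * (c ^ 2 * p / (1 + \<rho> * s ^ 2)) * p
        + - (s * c * (p ^ 2 - L ^ 2 / s ^ 4 + \<xi> - 2 * \<rho> * E) / (1 + \<rho> * s ^ 2)) * (c / s))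
      = - 2 * (L ^ 2 * (c / s) ^ 2 - (E + L ^ 2 / 2)) * (L * (c / s) ^ 2 / (1 + \<rho> * s ^ 2))"
proof -
  have factor: "- L * (- 1 / s ^ 2 * (c ^ 2 * p / K) * p + - (s * c * X / K) * (c / s))
      = L * c ^ 2 / K * (p ^ 2 / s ^ 2 + X)" if "K \<noteq> 0" for K X :: real
    using s that by (simp add: field_simps power2_eq_square)
  have xi: "\<xi> * s ^ 2 = 2 * E * (1 + \<rho> * s ^ 2) - c ^ 2 * p ^ 2 - L ^ 2 * (c / s) ^ 2"
    using energy by simp
  have coth: "(c / s) ^ 2 = 1 + 1 / s ^ 2"
    using s c by (simp add: power_divide field_simps)
  have "p ^ 2 / s ^ 2 + (p ^ 2 - L ^ 2 / s ^ 4 + \<xi> - 2 * \<rho> * E)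
      = (c ^ 2 * p ^ 2 + \<xi> * s ^ 2 - 2 * \<rho> * E * s ^ 2 - L ^ 2 / s ^ 2) / s ^ 2"
    using s c by (simp add: field_simps power2_eq_square power4_eq_xxxx)
  also have "c ^ 2 * p ^ 2 + \<xi> * s ^ 2 - 2 * \<rho> * E * s ^ 2 - L ^ 2 / s ^ 2
      = 2 * E - L ^ 2 * (c / s) ^ 2 - L ^ 2 / s ^ 2"
    unfolding xi by (simp add: algebra_simps)
  also have "\<dots> = - 2 * (L ^ 2 * (c / s) ^ 2 - (E + L ^ 2 / 2))"
    unfolding coth by (simp add: algebra_simps)
  finally show ?thesis
    unfolding factor[OF K] by (simp add: power_divide ac_simps)
qed

lemma energy_level_turning_point_identity:
  fixes s c L \<rho> \<xi> E :: real
  assumes "s \<noteq> 0" "c ^ 2 = 1 + s ^ 2"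
    and "L ^ 2 * (c / s) ^ 2 + \<xi> * s ^ 2 = 2 * E * (1 + \<rho> * s ^ 2)"
  shows "(L ^ 2 * (c / s) ^ 2 - (E + L ^ 2 / 2)) ^ 2
      = (E + L ^ 2 / 2) ^ 2 + L ^ 2 * (2 * (\<rho> - 1) * E - \<xi>)"
  using assms by (simp add: field_simps power2_eq_square) algebra

locale level_trajectory =
  fixes \<rho> \<xi> E L :: real and chi phi pchi pphi :: "real \<Rightarrow> real"
  assumes rho_nonneg: "0 \<le> \<rho>"
    and trajectory: "ham_trajectory \<rho> \<xi> chi phi pchi pphi"
    and momentum: "\<And>t. pphi t = L"
    and energy: "\<And>t. Ham \<rho> \<xi> (chi t) (phi t) (pchi t) L = E"
begin

lemma chi_pos: "0 < chi t"
  and hamilton_equations: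
    "(chi has_real_derivative deriv (\<lambda>p. Ham \<rho> \<xi> (chi t) (phi t) p L) (pchi t)) (at t)"
    "(phi has_real_derivative deriv (\<lambda>q. Ham \<rho> \<xi> (chi t) (phi t) (pchi t) q) L) (at t)"
    "(pchi has_real_derivative - deriv (\<lambda>x. Ham \<rho> \<xi> x (phi t) (pchi t) L) (chi t)) (at t)"
  using trajectory by (simp_all add: ham_trajectory_def momentum)

lemma conformal_factor_pos: "0 < 1 + \<rho> * sinh (chi t) ^ 2"
  using rho_nonneg by (simp add: add_pos_nonneg)

lemma energy_eq:
  "cosh (chi t) ^ 2 * pchi t ^ 2 + L ^ 2 * (cosh (chi t) / sinh (chi t)) ^ 2 + \<xi> * sinh (chi t) ^ 2
     = 2 * E * (1 + \<rho> * sinh (chi t) ^ 2)"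
  using energy[of t] conformal_factor_pos[of t] by (simp add: Ham_eq_coth field_simps)

lemma chi_deriv:
  "(chi has_real_derivative cosh (chi t) ^ 2 * pchi t / (1 + \<rho> * sinh (chi t) ^ 2)) (at t)"
  using hamilton_equations(1) by (simp add: DERIV_imp_deriv[OF has_real_derivative_Ham_pchi])

definition angular_speed :: "real \<Rightarrow> real" where
  "angular_speed t = L * (cosh (chi t) / sinh (chi t)) ^ 2 / (1 + \<rho> * sinh (chi t) ^ 2)"

lemma phi_deriv: "(phi has_real_derivative angular_speed t) (at t)"
  using hamilton_equations(2)
  by (simp add: DERIV_imp_deriv[OF has_real_derivative_Ham_pphi] angular_speed_def)

lemma pchi_deriv:
  "(pchi has_real_derivative
     - (sinh (chi t) * cosh (chi t) * (pchi t ^ 2 - L ^ 2 / sinh (chi t) ^ 4 + \<xi> - 2 * \<rho> * E)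
        / (1 + \<rho> * sinh (chi t) ^ 2))) (at t)"
proof -
  have "chi t \<noteq> 0" "1 + \<rho> * sinh (chi t) ^ 2 \<noteq> 0"
    using chi_pos[of t] conformal_factor_pos[of t] by auto
  then have "deriv (\<lambda>x. Ham \<rho> \<xi> x (phi t) (pchi t) L) (chi t)
      = sinh (chi t) * cosh (chi t) * (pchi t ^ 2 - L ^ 2 / sinh (chi t) ^ 4 + \<xi> - 2 * \<rho> * E)
        / (1 + \<rho> * sinh (chi t) ^ 2)"
    using DERIV_imp_deriv[OF has_real_derivative_Ham_chi] by (simp add: energy)
  then show ?thesis
    using hamilton_equations(3)[of t] by simp
qed

definition orbit_u :: "real \<Rightarrow> real" where
  "orbit_u t = L ^ 2 * (cosh (chi t) / sinh (chi t)) ^ 2 - (E + L ^ 2 / 2)"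

definition orbit_v :: "real \<Rightarrow> real" where
  "orbit_v t = - L * (cosh (chi t) / sinh (chi t) * pchi t)"

lemma coth_chi_deriv:
  "((\<lambda>t. cosh (chi t) / sinh (chi t)) has_real_derivative
     - 1 / sinh (chi t) ^ 2 * (cosh (chi t) ^ 2 * pchi t / (1 + \<rho> * sinh (chi t) ^ 2))) (at t)"
proof -
  have "((\<lambda>x. cosh x / sinh x) has_real_derivative - 1 / sinh (chi t) ^ 2) (at (chi t))"
    using chi_pos[of t] by (intro has_real_derivative_coth) simp
  from DERIV_chain2[OF this chi_deriv] show ?thesis .
qed

lemma orbit_u_deriv: "(orbit_u has_real_derivative 2 * orbit_v t * angular_speed t) (at t)"
  unfolding orbit_u_def
  by (rule DERIV_cong[OF DERIV_diff[OF DERIV_cmult[OF DERIV_power[OF coth_chi_deriv]] DERIV_const]])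
    (simp add: orbit_v_def angular_speed_def power2_eq_square mult_ac)

lemma orbit_v_deriv: "(orbit_v has_real_derivative - 2 * orbit_u t * angular_speed t) (at t)"
  unfolding orbit_v_def orbit_u_def angular_speed_def
  apply (rule DERIV_cong[OF DERIV_cmult[OF DERIV_mult[OF coth_chi_deriv pchi_deriv]]])
  apply (rule energy_level_rotation_identity)
  using chi_pos[of t] conformal_factor_pos[of t] energy_eq[of t] by (auto simp: cosh_square_eq)

lemma pchi_eq_0_at_min:
  assumes "\<And>t. chi t0 \<le> chi t"
  shows "pchi t0 = 0"
proof -
  have "cosh (chi t0) ^ 2 * pchi t0 / (1 + \<rho> * sinh (chi t0) ^ 2) = 0"
    by (rule DERIV_local_min[OF chi_deriv zero_less_one]) (use assms in auto)
  then show ?thesis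
    using conformal_factor_pos[of t0] by simp
qed

lemma orbit_u_le_at_min:
  assumes "\<And>t. chi t0 \<le> chi t"
  shows "orbit_u t \<le> orbit_u t0"
  using coth_sq_antimono[OF chi_pos assms] by (simp add: orbit_u_def mult_left_mono)

lemma orbit_u_sq_at_turning_point:
  assumes "pchi t = 0"
  shows "orbit_u t ^ 2 = (E + L ^ 2 / 2) ^ 2 + L ^ 2 * (2 * (\<rho> - 1) * E - \<xi>)"
proof -
  have "sinh (chi t) \<noteq> 0" "cosh (chi t) ^ 2 = 1 + sinh (chi t) ^ 2"
    using chi_pos[of t] by (auto simp: cosh_square_eq)
  with energy_eq[of t] assms show ?thesis
    unfolding orbit_u_def by (intro energy_level_turning_point_identity) auto
qed

lemma orbit_u_eq_cos_at_min:
  assumes "\<And>t. chi t0 \<le> chi t" and "phi t0 = 0"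
  shows "orbit_u t = orbit_u t0 * cos (2 * phi t)"
proof (rule rotating_pair_eq_cos[OF orbit_u_deriv orbit_v_deriv phi_deriv])
  show "orbit_v t0 = 0"
    using pchi_eq_0_at_min[OF assms(1)] by (simp add: orbit_v_def)
qed fact

lemma orbit_u_at_min_nonneg:
  assumes "\<And>t. chi t0 \<le> chi t" and "phi t0 = 0" and "L \<noteq> 0"
  shows "0 \<le> orbit_u t0"
proof (rule rotating_pair_max_nonneg[where u = orbit_u and \<theta> = phi and \<omega> = angular_speed])
  show "orbit_u t = orbit_u t0 * cos (2 * phi t)" for t
    using assms(1,2) by (rule orbit_u_eq_cos_at_min)
  show "orbit_u t \<le> orbit_u t0" for t
    using assms(1) by (rule orbit_u_le_at_min)
  show "angular_speed t0 \<noteq> 0"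
    using assms(3) chi_pos[of t0] conformal_factor_pos[of t0] by (simp add: angular_speed_def)
qed (fact phi_deriv assms(2))+

lemma energy_pos:
  assumes "0 \<le> \<xi>" "L \<noteq> 0"
  shows "0 < E"
proof -
  have "0 < L ^ 2 * (cosh (chi 0) / sinh (chi 0)) ^ 2"
    using assms(2) chi_pos[of 0] by simp
  then have "0 < 2 * E * (1 + \<rho> * sinh (chi 0) ^ 2)"
    unfolding energy_eq[of 0, symmetric] using assms(1) by (intro add_pos_nonneg add_nonneg_pos) auto
  then show ?thesis
    using conformal_factor_pos[of 0] by (simp add: zero_less_mult_iff)
qed

end

theorem proposition13:
  fixes \<rho> \<xi> E L :: real and chi phi pchi pphi :: "real \<Rightarrow> real"
  defines "\<sigma> \<equiv> 2 * (\<rho> - 1) * E - \<xi>"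
  defines "e \<equiv> sqrt (1 + L ^ 2 * \<sigma> / (E + L ^ 2 / 2) ^ 2)"
  defines "Eplus \<equiv> L * (sqrt (\<xi> + \<rho> * (\<rho> - 1) * L ^ 2) - (\<rho> - 1 / 2) * L)"
  assumes rho: "\<rho> > 0" "\<rho> \<noteq> 1"
    and L: "L > 0"
    and E: "Eplus \<le> E" "E < \<xi> / (2 * \<rho>)"
    and xi: "\<xi> - \<rho> * L ^ 2 > 0"
    and traj: "ham_trajectory \<rho> \<xi> chi phi pchi pphi"
    and energy: "\<forall>t. Ham \<rho> \<xi> (chi t) (phi t) (pchi t) (pphi t) = E"
    and mom: "\<forall>t. pphi t = L"
    and normal: "\<exists>t0. (\<forall>t. chi t0 \<le> chi t) \<and> phi t0 = 0"
  shows "(\<forall>t. L ^ 2 / tanh (chi t) ^ 2 = (E + L ^ 2 / 2) * (1 + e * cos (2 * phi t)))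
         \<and> 0 \<le> 1 + L ^ 2 * \<sigma> / (E + L ^ 2 / 2) ^ 2 \<and> e < 1"
proof -
  interpret level_trajectory \<rho> \<xi> E L chi phi pchi pphi
    using rho traj energy mom by unfold_locales auto
  obtain t0 where min: "\<And>t. chi t0 \<le> chi t" and "phi t0 = 0"
    using normal by blast
  have "0 \<le> \<rho> * L ^ 2"
    using rho by simp
  with xi L have "0 < E"
    by (intro energy_pos) auto
  define A where "A = E + L ^ 2 / 2"
  have "0 < A" using \<open>0 < E\<close> by (simp add: A_def add_pos_nonneg)
  have radicand: "1 + L ^ 2 * \<sigma> / A ^ 2 = (orbit_u t0 / A) ^ 2"
    using orbit_u_sq_at_turning_point[OF pchi_eq_0_at_min[OF min]] \<open>0 < A\<close>
    by (simp add: A_def \<sigma>_def field_simps power_divide)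
  with orbit_u_at_min_nonneg[OF min \<open>phi t0 = 0\<close>] L \<open>0 < A\<close> have e: "e = orbit_u t0 / A"
    by (simp add: e_def A_def)
  have "\<sigma> < 0"
    using E(2) rho \<open>0 < E\<close> by (simp add: \<sigma>_def field_simps)
  show ?thesis
  proof (intro conjI allI)
    fix t
    have "L ^ 2 / tanh (chi t) ^ 2 = orbit_u t + A"
      by (simp add: orbit_u_def A_def tanh_def power_divide)
    also have "\<dots> = A * (1 + e * cos (2 * phi t))"
      using \<open>0 < A\<close> by (simp add: orbit_u_eq_cos_at_min[OF min \<open>phi t0 = 0\<close>, of t] e field_simps)
    finally show "L ^ 2 / tanh (chi t) ^ 2 = (E + L ^ 2 / 2) * (1 + e * cos (2 * phi t))"
      by (simp add: A_def)
    show "0 \<le> 1 + L ^ 2 * \<sigma> / (E + L ^ 2 / 2) ^ 2"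
      using radicand by (simp add: A_def)
    show "e < 1"
      using \<open>\<sigma> < 0\<close> L \<open>0 < A\<close> by (simp add: e_def A_def[symmetric] mult_pos_neg divide_neg_pos)
  qed
qed

end
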